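(* Let $m\ge1$ and let $P=(p_{ij})$ be an $m\times m$ real symmetric matrix such that (A1) $p_{ij}=p_{ji}\le0$ for $i\ne j$, and (A2) $0<r_1\le\bar p_i:=\sum_{j=1}^mp_{ij}\le r_2$ for every $i$, where $r_1,r_2$ are positive constants. For $\beta\in\mathbb{R}^m$, let $\alpha\in\mathbb{R}^m$ be the solution of $P\alpha=\beta$. Then for all $i\ne j$, $$|\alpha_i-\alpha_j|\le m(m-1)\frac{r_2}{r_1}\frac{|\beta|}{|p_{ij}|+r_1},$$ where $|\beta|=\max_i|\beta_i|$. *)

theory Defs
  imports "HOL-Analysis.Analysis"
begin

definition maxnorm :: "real ^ 'n \<Rightarrow> real" where
  "maxnorm v = Max (range (\<lambda>i. \<bar>v $ i\<bar>))"

end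

theory Submission
  imports Defs
begin

text \<open>
  Let \<open>\<alpha>\<^sub>j < \<alpha>\<^sub>i\<close>, let \<open>B\<close> be the max-norm of \<open>\<beta>\<close> and \<open>m\<close> the dimension. Summing the
  equations \<open>(P \<alpha>)\<^sub>k = \<beta>\<^sub>k\<close> over the superlevel set \<open>S = {k. \<alpha>\<^sub>i \<le> \<alpha>\<^sub>k}\<close>, the symmetric
  couplings inside \<open>S\<close> cancel and
  \<open>\<Sum>\<^sub>k\<^sub>\<in>\<^sub>S \<beta>\<^sub>k = \<Sum>\<^sub>k\<^sub>\<in>\<^sub>S p\<^sub>k \<alpha>\<^sub>k + \<Sum>\<^sub>k\<^sub>\<in>\<^sub>S \<Sum>\<^sub>l\<^sub>\<notin>\<^sub>S p\<^sub>k\<^sub>l (\<alpha>\<^sub>l - \<alpha>\<^sub>k)\<close>, where \<open>p\<^sub>k\<close> is the row sum.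
  If \<open>\<alpha>\<^sub>i \<ge> 0\<close>, every term on the right is nonnegative; keeping only the coupling
  \<open>(i, j)\<close> and \<open>p\<^sub>i \<alpha>\<^sub>i \<ge> r\<^sub>1 \<alpha>\<^sub>i\<close>, and using \<open>card S \<le> m - 1\<close> (as \<open>j \<notin> S\<close>), gives
  \<open>|p\<^sub>i\<^sub>j| (\<alpha>\<^sub>i - \<alpha>\<^sub>j) + r\<^sub>1 \<alpha>\<^sub>i \<le> (m - 1) B\<close>. Applied to \<open>-\<alpha>\<close> this bounds
  \<open>|p\<^sub>i\<^sub>j| (\<alpha>\<^sub>i - \<alpha>\<^sub>j) - r\<^sub>1 \<alpha>\<^sub>j\<close> when \<open>\<alpha>\<^sub>j \<le> 0\<close>, and a case split on the signs yields
  \<open>(|p\<^sub>i\<^sub>j| + r\<^sub>1) |\<alpha>\<^sub>i - \<alpha>\<^sub>j| \<le> 2 (m - 1) B\<close>. This is sharper than the claim, because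
  \<open>2 \<le> m\<close> and \<open>r\<^sub>1 \<le> r\<^sub>2\<close>.
\<close>

lemma abs_le_maxnorm: "\<bar>v $ k\<bar> \<le> maxnorm (v :: real ^ 'n)"
  unfolding maxnorm_def by (rule Max_ge) auto

lemma maxnorm_nonneg: "0 \<le> maxnorm (v :: real ^ 'n)"
  using abs_le_maxnorm[of v] abs_ge_zero order_trans by blast

lemma maxnorm_uminus: "maxnorm (- v) = maxnorm (v :: real ^ 'n)"
  unfolding maxnorm_def by simp

lemma symmetric_matrix_entry:
  assumes "transpose P = P"
  shows "P $ k $ l = P $ l $ k"
  by (metis assms transpose_def vec_lambda_beta)

lemma matrix_vector_mult_component:
  "(P *v x) $ k = (\<Sum>l\<in>UNIV. P $ k $ l * x $ l)"
  by (simp add: matrix_vector_mult_def)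

lemma matrix_vector_mult_uminus_right:
  fixes P :: "'a::comm_ring_1 ^ 'n ^ 'm"
  shows "P *v (- x) = - (P *v x)"
  by (simp add: vec_eq_iff matrix_vector_mult_component sum_negf)

lemma sum_symmetric_antisym_zero:
  fixes P :: "real ^ 'n ^ 'n"
  assumes "transpose P = P"
  shows "(\<Sum>k\<in>S. \<Sum>l\<in>S. P $ k $ l * (x $ l - x $ k)) = 0"
proof -
  have "(\<Sum>k\<in>S. \<Sum>l\<in>S. P $ k $ l * (x $ l - x $ k)) = (\<Sum>l\<in>S. \<Sum>k\<in>S. P $ k $ l * (x $ l - x $ k))"
    by (rule sum.swap)
  also have "\<dots> = (\<Sum>k\<in>S. \<Sum>l\<in>S. - (P $ k $ l * (x $ l - x $ k)))"
    by (intro sum.cong refl) (simp add: symmetric_matrix_entry[OF assms, of _ "_ :: 'n"] algebra_simps)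
  also have "\<dots> = - (\<Sum>k\<in>S. \<Sum>l\<in>S. P $ k $ l * (x $ l - x $ k))"
    by (simp add: sum_negf)
  finally show ?thesis by simp
qed

lemma sum_solution_over_set:
  fixes P :: "real ^ 'n ^ 'n"
  assumes "transpose P = P"
  shows "(\<Sum>k\<in>S. (P *v x) $ k) =
    (\<Sum>k\<in>S. (\<Sum>l\<in>UNIV. P $ k $ l) * x $ k) + (\<Sum>k\<in>S. \<Sum>l\<in>-S. P $ k $ l * (x $ l - x $ k))"
proof -
  have row: "(P *v x) $ k = (\<Sum>l\<in>UNIV. P $ k $ l) * x $ k
      + (\<Sum>l\<in>S. P $ k $ l * (x $ l - x $ k)) + (\<Sum>l\<in>-S. P $ k $ l * (x $ l - x $ k))" for k
  proof -
    have "(\<Sum>l\<in>UNIV. P $ k $ l * (x $ l - x $ k))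
        = (\<Sum>l\<in>S. P $ k $ l * (x $ l - x $ k)) + (\<Sum>l\<in>-S. P $ k $ l * (x $ l - x $ k))"
      using sum.Int_Diff[of UNIV "\<lambda>l. P $ k $ l * (x $ l - x $ k)" S] by (simp add: Compl_eq_Diff_UNIV)
    then show ?thesis
      by (simp add: matrix_vector_mult_component sum_distrib_right right_diff_distrib sum_subtractf)
  qed
  show ?thesis
    by (simp add: row sum.distrib sum_symmetric_antisym_zero[OF assms])
qed

lemma superlevel_set_bound:
  fixes P :: "real ^ 'n ^ 'n" and \<alpha> :: "real ^ 'n"
  assumes sym: "transpose P = P"
    and offdiag: "\<And>k l. k \<noteq> l \<Longrightarrow> P $ k $ l \<le> 0"
    and r1_nonneg: "0 \<le> r1"
    and rowsum_lo: "\<And>k. r1 \<le> (\<Sum>l\<in>UNIV. P $ k $ l)"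
    and less: "\<alpha> $ j < \<alpha> $ i" and nonneg: "0 \<le> \<alpha> $ i"
  shows "\<bar>P $ i $ j\<bar> * (\<alpha> $ i - \<alpha> $ j) + r1 * \<alpha> $ i \<le> real (CARD('n) - 1) * maxnorm (P *v \<alpha>)"
proof -
  define S where "S = {k. \<alpha> $ i \<le> \<alpha> $ k}"
  have iS: "i \<in> S" and jS: "j \<notin> S" using less by (auto simp: S_def)
  have coupling_nonneg: "0 \<le> P $ k $ l * (\<alpha> $ l - \<alpha> $ k)" if "k \<in> S" "l \<notin> S" for k l
  proof -
    have "k \<noteq> l" "\<alpha> $ l < \<alpha> $ k" using that by (auto simp: S_def)
    then show ?thesis using offdiag[of k l] by (intro mult_nonpos_nonpos) auto
  qed
  have "P $ i $ j \<le> 0" using offdiag[of i j] less by auto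
  then have "\<bar>P $ i $ j\<bar> * (\<alpha> $ i - \<alpha> $ j) = P $ i $ j * (\<alpha> $ j - \<alpha> $ i)"
    by (simp add: abs_of_nonpos algebra_simps)
  also have "\<dots> \<le> (\<Sum>l\<in>-S. P $ i $ l * (\<alpha> $ l - \<alpha> $ i))"
    by (rule member_le_sum) (use jS iS coupling_nonneg in auto)
  also have "\<dots> \<le> (\<Sum>k\<in>S. \<Sum>l\<in>-S. P $ k $ l * (\<alpha> $ l - \<alpha> $ k))"
    by (rule member_le_sum[of i S "\<lambda>k. \<Sum>l\<in>-S. P $ k $ l * (\<alpha> $ l - \<alpha> $ k)"])
       (use iS coupling_nonneg in \<open>auto intro: sum_nonneg\<close>)
  finally have couplings: "\<bar>P $ i $ j\<bar> * (\<alpha> $ i - \<alpha> $ j) \<le> (\<Sum>k\<in>S. \<Sum>l\<in>-S. P $ k $ l * (\<alpha> $ l - \<alpha> $ k))" .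
  have "r1 * \<alpha> $ i \<le> (\<Sum>l\<in>UNIV. P $ i $ l) * \<alpha> $ i"
    using rowsum_lo[of i] nonneg by (simp add: mult_right_mono)
  also have "\<dots> \<le> (\<Sum>k\<in>S. (\<Sum>l\<in>UNIV. P $ k $ l) * \<alpha> $ k)"
    by (rule member_le_sum)
       (use iS rowsum_lo r1_nonneg nonneg order_trans in \<open>auto simp: S_def intro!: mult_nonneg_nonneg\<close>)
  finally have diagonal: "r1 * \<alpha> $ i \<le> (\<Sum>k\<in>S. (\<Sum>l\<in>UNIV. P $ k $ l) * \<alpha> $ k)" .
  have "card S \<le> card (UNIV - {j})"
    using jS by (intro card_mono) auto
  then have "card S \<le> CARD('n) - 1"
    by (simp add: card_Diff_singleton)
  then have card: "real (card S) \<le> real (CARD('n) - 1)"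
    by (simp only: of_nat_le_iff)
  have "(\<Sum>k\<in>S. (P *v \<alpha>) $ k) \<le> (\<Sum>k\<in>S. maxnorm (P *v \<alpha>))"
    by (rule sum_mono) (use abs_le_maxnorm[of "P *v \<alpha>"] in \<open>auto simp: abs_le_iff\<close>)
  also have "\<dots> = real (card S) * maxnorm (P *v \<alpha>)" by simp
  also have "\<dots> \<le> real (CARD('n) - 1) * maxnorm (P *v \<alpha>)"
    using card maxnorm_nonneg by (rule mult_right_mono)
  finally have "(\<Sum>k\<in>S. (P *v \<alpha>) $ k) \<le> real (CARD('n) - 1) * maxnorm (P *v \<alpha>)" .
  then show ?thesis
    using sum_solution_over_set[OF sym, where S = S and x = \<alpha>] couplings diagonal by linarith
qed

lemma ordered_difference_bound:
  fixes P :: "real ^ 'n ^ 'n" and \<alpha> :: "real ^ 'n"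
  assumes sym: "transpose P = P"
    and offdiag: "\<And>k l. k \<noteq> l \<Longrightarrow> P $ k $ l \<le> 0"
    and r1_nonneg: "0 \<le> r1"
    and rowsum_lo: "\<And>k. r1 \<le> (\<Sum>l\<in>UNIV. P $ k $ l)"
    and less: "\<alpha> $ j < \<alpha> $ i"
  shows "(\<bar>P $ i $ j\<bar> + r1) * (\<alpha> $ i - \<alpha> $ j) \<le> 2 * real (CARD('n) - 1) * maxnorm (P *v \<alpha>)"
proof -
  let ?B = "real (CARD('n) - 1) * maxnorm (P *v \<alpha>)"
  have upper: "\<bar>P $ i $ j\<bar> * (\<alpha> $ i - \<alpha> $ j) + r1 * \<alpha> $ i \<le> ?B" if "0 \<le> \<alpha> $ i"
    using superlevel_set_bound[OF sym offdiag r1_nonneg rowsum_lo less that] .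
  have lower: "\<bar>P $ i $ j\<bar> * (\<alpha> $ i - \<alpha> $ j) - r1 * \<alpha> $ j \<le> ?B" if "\<alpha> $ j \<le> 0"
    using superlevel_set_bound[OF sym offdiag r1_nonneg rowsum_lo, of "- \<alpha>" i j] less that
    by (simp add: matrix_vector_mult_uminus_right maxnorm_uminus symmetric_matrix_entry[OF sym, of j i])
  have "0 \<le> ?B" "0 \<le> \<bar>P $ i $ j\<bar> * (\<alpha> $ i - \<alpha> $ j)"
    using maxnorm_nonneg[of "P *v \<alpha>"] less by auto
  moreover have "0 \<le> r1 * \<alpha> $ j" if "0 \<le> \<alpha> $ j"
    using that r1_nonneg by simp
  moreover have "r1 * \<alpha> $ i \<le> 0" if "\<alpha> $ i \<le> 0"
    using that r1_nonneg by (simp add: mult_nonneg_nonpos)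
  ultimately show ?thesis
    using upper lower less by (cases "0 \<le> \<alpha> $ j"; cases "0 \<le> \<alpha> $ i") (auto simp: algebra_simps)
qed

lemma difference_bound:
  fixes P :: "real ^ 'n ^ 'n" and \<alpha> :: "real ^ 'n"
  assumes sym: "transpose P = P"
    and offdiag: "\<And>k l. k \<noteq> l \<Longrightarrow> P $ k $ l \<le> 0"
    and r1_nonneg: "0 \<le> r1"
    and rowsum_lo: "\<And>k. r1 \<le> (\<Sum>l\<in>UNIV. P $ k $ l)"
  shows "(\<bar>P $ i $ j\<bar> + r1) * \<bar>\<alpha> $ i - \<alpha> $ j\<bar> \<le> 2 * real (CARD('n) - 1) * maxnorm (P *v \<alpha>)"
proof (cases "\<alpha> $ j" "\<alpha> $ i" rule: linorder_cases)
  case less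
  then show ?thesis
    using ordered_difference_bound[OF sym offdiag r1_nonneg rowsum_lo less] by simp
next
  case equal
  then show ?thesis using maxnorm_nonneg[of "P *v \<alpha>"] by simp
next
  case greater
  then show ?thesis
    using ordered_difference_bound[OF sym offdiag r1_nonneg rowsum_lo greater]
    by (simp add: symmetric_matrix_entry[OF sym, of j i] abs_minus_commute)
qed

theorem proposition2p1:
  fixes P :: "real ^ 'n ^ 'n" and \<alpha> \<beta> :: "real ^ 'n" and r1 r2 :: real
  assumes sym: "transpose P = P"
    and offdiag: "\<And>i j. i \<noteq> j \<Longrightarrow> P $ i $ j \<le> 0"
    and r1pos: "0 < r1"
    and rowsum_lo: "\<And>i. r1 \<le> (\<Sum>j\<in>UNIV. P $ i $ j)"
    and rowsum_hi: "\<And>i. (\<Sum>j\<in>UNIV. P $ i $ j) \<le> r2"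
    and sol: "P *v \<alpha> = \<beta>"
    and ij: "i \<noteq> j"
  shows "\<bar>\<alpha> $ i - \<alpha> $ j\<bar>
           \<le> real (CARD('n) * (CARD('n) - 1)) * (r2 / r1) * (maxnorm \<beta> / (\<bar>P $ i $ j\<bar> + r1))"
proof -
  let ?q = "real (CARD('n) - 1) * (maxnorm \<beta> / (\<bar>P $ i $ j\<bar> + r1))"
  have pos: "0 < \<bar>P $ i $ j\<bar> + r1" using r1pos by simp
  have "\<bar>\<alpha> $ i - \<alpha> $ j\<bar> \<le> 2 * ?q"
    using difference_bound[OF sym offdiag _ rowsum_lo, of i j \<alpha>] r1pos pos sol
    by (simp add: pos_le_divide_eq mult.commute mult.left_commute)
  also have "\<dots> \<le> (real CARD('n) * (r2 / r1)) * ?q"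
  proof (rule mult_right_mono)
    have "card {i, j} \<le> CARD('n)" by (rule card_mono) auto
    then have "(2::real) \<le> real CARD('n)" using ij by simp
    moreover have "1 \<le> r2 / r1" using rowsum_lo[of i] rowsum_hi[of i] r1pos by simp
    ultimately show "2 \<le> real CARD('n) * (r2 / r1)"
      using mult_mono[of 2 "real CARD('n)" 1 "r2 / r1"] by simp
    show "0 \<le> ?q" using maxnorm_nonneg[of \<beta>] pos by simp
  qed
  finally show ?thesis by (simp add: ac_simps)
qed

end
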